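(* Let $0<\mu<1/2$ be such that for every $r>0$ the spiral $t\mapsto(r\cos t,r\sin t,\mu rt)$ is self-expanded, fix $r>0$ and let $\gamma(t)=(r\cos t,r\sin t,\mu rt)$, $t\in\mathbb{R}$. Let $\lambda=1/\sqrt5$ and $\alpha=\arccos(\lambda)$. Then for every $t\in\mathbb{R}$ the cone $C(t,\alpha)$ does not intersect the line $\{(0,0,z):z\in\mathbb{R}\}$.
   Context: $\mathbb{R}^3$ carries the Euclidean inner product $\langle\cdot,\cdot\rangle$ and norm $\|\cdot\|$. A curve is self-expanded if for all $t_1\le t_2\le t_3$: $\|\gamma(t_1)-\gamma(t_2)\|\le\|\gamma(t_1)-\gamma(t_3)\|$. For $v\in\mathbb{S}^2$ and $\alpha\in[0,\pi)$, $C(v,\alpha)=\{u:\langle u,v\rangle>\|u\|\cos\alpha\}\cup\{0\}$, and $C(t,\alpha)=\gamma(t)+C\big(\gamma'(t)/\|\gamma'(t)\|,\alpha\big)$. *)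

theory Defs
  imports "HOL-Analysis.Analysis"
begin

definition self_expanded :: "(real \<Rightarrow> real^3) \<Rightarrow> bool" where
  "self_expanded \<gamma> \<longleftrightarrow>
     (\<forall>t1 t2 t3. t1 \<le> t2 \<longrightarrow> t2 \<le> t3 \<longrightarrow>
        norm (\<gamma> t1 - \<gamma> t2) \<le> norm (\<gamma> t1 - \<gamma> t3))"

definition cone_dir :: "real^3 \<Rightarrow> real \<Rightarrow> (real^3) set" where
  "cone_dir v \<alpha> = {u. inner u v > norm u * cos \<alpha>} \<union> {0}"

definition cone_at :: "(real \<Rightarrow> real^3) \<Rightarrow> real \<Rightarrow> real \<Rightarrow> (real^3) set" where
  "cone_at \<gamma> t \<alpha> =
     (\<lambda>u. \<gamma> t + u) ` cone_dir (vector_derivative \<gamma> (at t) /\<^sub>R norm (vector_derivative \<gamma> (at t))) \<alpha>"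

definition spiral :: "real \<Rightarrow> real \<Rightarrow> real \<Rightarrow> real^3" where
  "spiral r \<mu> t = vector [r * cos t, r * sin t, \<mu> * r * t]"

end

theory Submission
  imports Defs
begin

text \<open>The vector from \<open>\<gamma>(t)\<close> to a point \<open>(0,0,z)\<close> of the axis is \<open>(-r cos t, -r sin t, w)\<close>;
  its horizontal part is orthogonal to the horizontal part \<open>(-r sin t, r cos t)\<close> of the tangent
  \<open>\<gamma>'(t) = (-r sin t, r cos t, \<mu> r)\<close>, so only the vertical components contribute to the inner
  product. Hence the cosine of the angle between that vector and \<open>\<gamma>'(t)\<close> is at most
  \<open>\<mu> / sqrt (1 + \<mu>\<^sup>2)\<close>, which for \<open>\<mu> \<le> 1/2\<close> is at most \<open>1 / sqrt 5 = cos \<alpha>\<close>.\<close>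

lemma inner_vector_3:
  "inner (vector [a, b, c] :: real^3) (vector [a', b', c']) = a * a' + b * b' + c * c'"
  by (simp add: inner_vec_def sum_3)

lemma norm_vector_3: "norm (vector [a, b, c] :: real^3) = sqrt (a\<^sup>2 + b\<^sup>2 + c\<^sup>2)"
  by (simp add: norm_eq_sqrt_inner inner_vector_3 power2_eq_square)

lemma mem_cone_at_iff:
  "x \<in> cone_at \<gamma> t \<alpha> \<longleftrightarrow>
     x - \<gamma> t \<in> cone_dir (vector_derivative \<gamma> (at t) /\<^sub>R norm (vector_derivative \<gamma> (at t))) \<alpha>"
  unfolding cone_at_def by (auto simp: image_iff intro: bexI[where x = "x - \<gamma> t"])

lemma not_in_cone_dir:
  assumes "u \<noteq> 0" and "inner u v \<le> norm u * cos \<alpha>"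
  shows "u \<notin> cone_dir v \<alpha>"
  using assms unfolding cone_dir_def by auto

lemma vector_derivative_spiral:
  "vector_derivative (spiral r \<mu>) (at t) = vector [- r * sin t, r * cos t, \<mu> * r]"
proof (rule vector_derivative_at)
  have "spiral r \<mu> = (\<lambda>t. (r * cos t) *\<^sub>R vector [1, 0, 0] + (r * sin t) *\<^sub>R vector [0, 1, 0]
                          + (\<mu> * r * t) *\<^sub>R (vector [0, 0, 1] :: real^3))"
    unfolding spiral_def by (rule ext) (simp add: vec_eq_iff forall_3)
  then show "(spiral r \<mu> has_vector_derivative vector [- r * sin t, r * cos t, \<mu> * r]) (at t)"
    by (auto intro!: derivative_eq_intros simp: vec_eq_iff forall_3)
qed

lemma norm_vector_derivative_spiral:
  assumes "r \<ge> 0"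
  shows "norm (vector_derivative (spiral r \<mu>) (at t)) = r * sqrt (1 + \<mu>\<^sup>2)"
proof -
  have "(- r * sin t)\<^sup>2 + (r * cos t)\<^sup>2 + (\<mu> * r)\<^sup>2 = r\<^sup>2 * (1 + \<mu>\<^sup>2)"
    by (simp add: power_mult_distrib algebra_simps flip: distrib_left)
  then show ?thesis
    using assms by (simp add: vector_derivative_spiral norm_vector_3 real_sqrt_mult)
qed

lemma spiral_not_on_axis:
  assumes "r \<noteq> 0"
  shows "spiral r \<mu> t \<noteq> vector [0, 0, z]"
proof
  assume "spiral r \<mu> t = vector [0, 0, z]"
  then have "cos t = 0" "sin t = 0"
    using assms by (auto simp: spiral_def vec_eq_iff forall_3)
  then show False using sin_cos_squared_add[of t] by simp
qed

lemma spiral_axis_inner_unit_tangent_le: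
  fixes p :: "real^3"
  assumes "r > 0" and "\<mu> \<ge> 0" and p: "p = vector [0, 0, z]"
  shows "inner (p - spiral r \<mu> t) (vector_derivative (spiral r \<mu>) (at t) /\<^sub>R
           norm (vector_derivative (spiral r \<mu>) (at t)))
         \<le> norm (p - spiral r \<mu> t) * (\<mu> / sqrt (1 + \<mu>\<^sup>2))"
proof -
  define w where "w = z - \<mu> * r * t"
  have u: "p - spiral r \<mu> t = vector [- r * cos t, - r * sin t, w]"
    by (simp add: p spiral_def w_def vec_eq_iff forall_3)
  have "inner (p - spiral r \<mu> t) (vector_derivative (spiral r \<mu>) (at t) /\<^sub>R
           norm (vector_derivative (spiral r \<mu>) (at t))) = \<mu> * w / sqrt (1 + \<mu>\<^sup>2)"
  proof -
    have "norm (vector_derivative (spiral r \<mu>) (at t)) = r * sqrt (1 + \<mu>\<^sup>2)"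
      using assms(1) by (simp add: norm_vector_derivative_spiral)
    then show ?thesis
      using assms(1) by (simp add: u vector_derivative_spiral inner_vector_3 field_simps)
  qed
  also have "\<dots> \<le> \<bar>w\<bar> * (\<mu> / sqrt (1 + \<mu>\<^sup>2))"
    using assms(2) by (simp add: divide_right_mono mult_left_mono mult.commute[of "\<bar>w\<bar>"])
  also have "\<bar>w\<bar> \<le> norm (p - spiral r \<mu> t)"
    by (simp add: u norm_vector_3 real_le_rsqrt)
  then have "\<bar>w\<bar> * (\<mu> / sqrt (1 + \<mu>\<^sup>2)) \<le> norm (p - spiral r \<mu> t) * (\<mu> / sqrt (1 + \<mu>\<^sup>2))"
    using assms(2) by (intro mult_right_mono) auto
  finally show ?thesis .
qed

lemma div_sqrt_one_plus_square_le:
  assumes "0 \<le> \<mu>" and "\<mu> \<le> 1/2"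
  shows "\<mu> / sqrt (1 + \<mu>\<^sup>2) \<le> 1 / sqrt 5"
proof -
  have "\<mu> * sqrt 5 = sqrt (5 * \<mu>\<^sup>2)"
    using assms(1) by (simp add: real_sqrt_mult)
  also have "\<dots> \<le> sqrt (1 + \<mu>\<^sup>2)"
    using power_mono[OF assms(2,1), of 2] by (simp add: power_divide)
  finally show ?thesis
    by (simp add: field_simps add_pos_nonneg)
qed

theorem lemma4p5:
  fixes \<mu> r :: real
  assumes "0 < \<mu>" and "\<mu> < 1/2"
    and "\<forall>s>0. self_expanded (spiral s \<mu>)"
    and "r > 0"
  shows "\<forall>t. cone_at (spiral r \<mu>) t (arccos (1 / sqrt 5))
               \<inter> {vector [0, 0, z] | z. z \<in> (UNIV :: real set)} = {}"
proof (intro allI equals0I)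
  fix t p
  assume "p \<in> cone_at (spiral r \<mu>) t (arccos (1 / sqrt 5))
               \<inter> {vector [0, 0, z] | z. z \<in> (UNIV :: real set)}"
  then obtain z where p: "p = vector [0, 0, z]"
    and cone: "p \<in> cone_at (spiral r \<mu>) t (arccos (1 / sqrt 5))"
    by blast
  define u where "u = p - spiral r \<mu> t"
  define d where "d = vector_derivative (spiral r \<mu>) (at t)"
  have "inner u (d /\<^sub>R norm d) \<le> norm u * (\<mu> / sqrt (1 + \<mu>\<^sup>2))"
    unfolding u_def d_def using spiral_axis_inner_unit_tangent_le[OF assms(4) _ p] assms(1) by simp
  also have "\<dots> \<le> norm u * (1 / sqrt 5)"
    using div_sqrt_one_plus_square_le[of \<mu>] assms(1,2) by (intro mult_left_mono) auto
  also have "1 / sqrt 5 = cos (arccos (1 / sqrt 5))"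
    by (rule cos_arccos[symmetric]) (auto simp: field_simps intro: order_trans[of _ 0])
  finally have "inner u (d /\<^sub>R norm d) \<le> norm u * cos (arccos (1 / sqrt 5))" .
  moreover have "u \<noteq> 0"
    using spiral_not_on_axis[of r \<mu> t z] assms(4) p by (simp add: u_def)
  ultimately show False
    using cone not_in_cone_dir by (simp add: mem_cone_at_iff u_def d_def)
qed

end
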